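(* Let $\rho\in(0,1)$ and $g_\rho(z)=\frac{1-\rho^z}{1-\rho}$ for $z\in[0,1]$. Let $\ell\ge1$, $\Lambda=\{0,\dots,\ell\}$, $\lambda_i=i/\ell$, and $$\mathcal{P}^{\ell,\rho}(\pi)=\{\mathrm{P}\in\mathcal{PM}(\mathbb{R}^n):\ \mathrm{P}(\mathcal{C}(\lambda_i))\ge1-g_\rho(\lambda_i)\ \ \forall i\in\Lambda\}.$$ Then for every $\pmb{x}\in\mathbb{R}^n$ and $b\in\mathbb{R}$, $\sup_{\mathrm{P}\in\mathcal{P}^{\ell,\rho}(\pi)}\mathbf{E}_{\mathrm{P}}[\tilde{\pmb{a}}^T\pmb{x}]\le b$ holds if and only if there exist $w\in\mathbb{R}$, $v_i\ge0$, $\gamma_i\ge0$, $\pmb{u}_i\in\mathbb{R}^n$ ($i\in\Lambda$) and $\alpha_{ij},\beta_{ij}\ge0$ ($i\in\Lambda$, $j\in[n]$) such that $$w+\sum_{i\in\Lambda}(g_\rho(\lambda_i)-1)v_i\le b,$$ $$\gamma_i\overline\delta(\lambda_i)+\sum_{j\in[n]}\alpha_{ij}(\overline a_j(\lambda_i)-\hat a_j)+\sum_{j\in[n]}\beta_{ij}(\hat a_j-\underline a_j(\lambda_i))+\hat{\pmb{a}}^T\pmb{x}\le w-\sum_{k\le i}v_k\quad(i\in\Lambda),$$ $$\alpha_{ij}-\beta_{ij}+\pmb{B}_j^T\pmb{u}_i=x_j\quad(i\in\Lambda,\ j\in[n]),\qquad\|\pmb{u}_i\|_2\le\gamma_i\quad(i\in\Lambda),$$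 where $\pmb{B}_j$ is the $j$th column of $\pmb{B}$.
   Context: Fix $n\ge1$. For each $j\in[n]$ let $\hat a_j\in\mathbb{R}$ and $\underline a_j,\overline a_j>0$, and let $\pi_{\tilde a_j}:\mathbb{R}\to[0,1]$ be continuous with $\pi_{\tilde a_j}(\hat a_j)=1$, $\pi_{\tilde a_j}(t)=0$ for $t\notin(\hat a_j-\underline a_j,\hat a_j+\overline a_j)$, strictly increasing on $[\hat a_j-\underline a_j,\hat a_j]$ and strictly decreasing on $[\hat a_j,\hat a_j+\overline a_j]$. For $\lambda\in(0,1]$ write $\{t:\pi_{\tilde a_j}(t)\ge\lambda\}=[\underline a_j(\lambda),\overline a_j(\lambda)]$, and set $\underline a_j(0)=\hat a_j-\underline a_j$, $\overline a_j(0)=\hat a_j+\overline a_j$. Let $\Gamma>0$ and let $\pi_{\tilde\delta}:[0,\infty)\to[0,1]$ be continuous with $\pi_{\tilde\delta}(0)=1$, strictly decreasing on $[0,\Gamma]$ and $\pi_{\tilde\delta}(t)=0$ for $t\ge\Gamma$; for $\lambda\in(0,1]$ write $\{t\ge0:\pi_{\tilde\delta}(t)\ge\lambda\}=[0,\overline\delta(\lambda)]$ and set $\overline\delta(0)=\Gamma$. Let $\pmb{B}$ be a real $n\times n$ matrix, $\hat{\pmb{a}}=(\hat a_1,\dots,\hat a_n)$, and $\delta(\pmb{a})=\|\pmb{B}(\pmb{a}-\hat{\pmb{a}})\|_2$. The joint possibility distribution is $\pi(\pmb{a})=\min\{\pi_{\tilde a_1}(a_1),\dots,\pi_{\tilde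 a_n}(a_n),\pi_{\tilde\delta}(\delta(\pmb{a}))\}$ for $\pmb{a}\in\mathbb{R}^n$. For $\lambda\in[0,1]$, $\mathcal{C}(\lambda)=\{\pmb{a}\in\mathbb{R}^n:\ a_j\in[\underline a_j(\lambda),\overline a_j(\lambda)]\ \forall j\in[n],\ \|\pmb{B}(\pmb{a}-\hat{\pmb{a}})\|_2\le\overline\delta(\lambda)\}$; for $\lambda\in(0,1]$ this equals $\{\pmb{a}:\pi(\pmb{a})\ge\lambda\}$. $\mathcal{PM}(\mathbb{R}^n)$ is the set of Borel probability measures on $\mathbb{R}^n$. *)

theory Defs
  imports "HOL-Probability.Probability"
begin

definition g_rho :: "real \<Rightarrow> real \<Rightarrow> real" where
  "g_rho \<rho> z = (1 - \<rho> powr z) / (1 - \<rho>)"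

definition lcut :: "(real \<Rightarrow> real) \<Rightarrow> real \<Rightarrow> real \<Rightarrow> real \<Rightarrow> real" where
  "lcut p ahat lw lam = (if lam = 0 then ahat - lw else Inf {t. p t \<ge> lam})"

definition ucut :: "(real \<Rightarrow> real) \<Rightarrow> real \<Rightarrow> real \<Rightarrow> real \<Rightarrow> real" where
  "ucut p ahat uw lam = (if lam = 0 then ahat + uw else Sup {t. p t \<ge> lam})"

definition dcut :: "(real \<Rightarrow> real) \<Rightarrow> real \<Rightarrow> real \<Rightarrow> real" where
  "dcut pd \<Gamma> lam = (if lam = 0 then \<Gamma> else Sup {t. t \<ge> 0 \<and> pd t \<ge> lam})"

definition Cset :: "('n::finite \<Rightarrow> real \<Rightarrow> real) \<Rightarrow> real^'n \<Rightarrow> real^'n \<Rightarrow> real^'n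
    \<Rightarrow> (real \<Rightarrow> real) \<Rightarrow> real \<Rightarrow> real^'n^'n \<Rightarrow> real \<Rightarrow> (real^'n) set" where
  "Cset pa ahat lw uw pd \<Gamma> B lam =
     {a. (\<forall>j. lcut (pa j) (ahat $ j) (lw $ j) lam \<le> a $ j \<and> a $ j \<le> ucut (pa j) (ahat $ j) (uw $ j) lam)
         \<and> norm (B *v (a - ahat)) \<le> dcut pd \<Gamma> lam}"

definition PM :: "('n::finite) itself \<Rightarrow> (real^'n) measure set" where
  "PM _ = {P. sets P = sets borel \<and> prob_space P}"

definition Pset :: "nat \<Rightarrow> real \<Rightarrow> ('n::finite \<Rightarrow> real \<Rightarrow> real) \<Rightarrow> real^'n \<Rightarrow> real^'n \<Rightarrow> real^'n
    \<Rightarrow> (real \<Rightarrow> real) \<Rightarrow> real \<Rightarrow> real^'n^'n \<Rightarrow> (real^'n) measure set" where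
  "Pset l \<rho> pa ahat lw uw pd \<Gamma> B =
     {P \<in> PM TYPE('n). \<forall>i\<le>l. measure P (Cset pa ahat lw uw pd \<Gamma> B (real i / real l))
                              \<ge> 1 - g_rho \<rho> (real i / real l)}"

end

theory Submission
  imports Defs
begin

text \<open>The level sets \<open>C(\<lambda>\<^sub>0) \<supseteq> \<dots> \<supseteq> C(\<lambda>\<^sub>\<ell>)\<close> are compact and nested, and the
  ambiguity set only bounds the masses \<open>P(C(\<lambda>\<^sub>i)) \<ge> p\<^sub>i\<close> from below. The worst case is
  therefore the discrete distribution putting mass \<open>p\<^sub>i - p\<^sub>i\<^sub>+\<^sub>1\<close> on a maximiser of
  \<open>a \<bullet> x\<close> over \<open>C(\<lambda>\<^sub>i)\<close>, and by summation by parts the supremum is at most \<open>b\<close>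
  iff some staircase \<open>w - \<Sum>\<^sub>k v\<^sub>k 1\<^bsub>C(\<lambda>\<^sub>k)\<^esub>\<close> with \<open>v \<ge> 0\<close> dominates \<open>a \<bullet> x\<close>
  and has \<open>w - \<Sum>\<^sub>k p\<^sub>k v\<^sub>k \<le> b\<close>. Each of the resulting robust constraints
  \<open>max\<^bsub>C(\<lambda>\<^sub>i)\<^esub> a \<bullet> x \<le> t\<close> is then dualised with the separating hyperplane theorem:
  below the top level the norm ball has positive radius (Slater's condition), and the top
  level is the single point \<open>ahat\<close>.\<close>

section \<open>Robust linear constraints over a box and a norm ball\<close>

lemma matrix_vector_mult_inner_columns:
  "(B *v y) \<bullet> (u::real^'n) = (\<Sum>j\<in>UNIV. y $ j * (column j B \<bullet> u))"
proof -
  have "(B *v y) \<bullet> u = (\<Sum>i\<in>UNIV. \<Sum>j\<in>UNIV. y $ j * (B $ i $ j * u $ i))"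
    by (simp add: inner_vec_def matrix_vector_mult_def sum_distrib_left sum_distrib_right mult_ac)
  also have "\<dots> = (\<Sum>j\<in>UNIV. \<Sum>i\<in>UNIV. y $ j * (B $ i $ j * u $ i))"
    by (rule sum.swap)
  also have "\<dots> = (\<Sum>j\<in>UNIV. y $ j * (column j B \<bullet> u))"
    by (simp add: column_def inner_vec_def sum_distrib_left mult_ac)
  finally show ?thesis .
qed

lemma halfline_lower_bound:
  fixes \<mu> c S :: real
  assumes "\<And>r. r > S \<Longrightarrow> c \<le> \<mu> * r"
  shows "0 \<le> \<mu>" and "c \<le> \<mu> * S"
proof -
  show "0 \<le> \<mu>"
  proof (rule ccontr)
    assume neg: "\<not> 0 \<le> \<mu>"
    define r where "r = S + 1 + (\<bar>c\<bar> + \<bar>\<mu> * (S + 1)\<bar> + 1) / (- \<mu>)"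
    have "r > S" using neg by (simp add: r_def)
    moreover have "\<mu> * r = \<mu> * (S + 1) - (\<bar>c\<bar> + \<bar>\<mu> * (S + 1)\<bar> + 1)"
      using neg by (simp add: r_def field_simps)
    ultimately show False using assms by fastforce
  qed
  show "c \<le> \<mu> * S"
  proof (rule field_le_epsilon)
    fix e :: real assume e: "e > 0"
    have "c \<le> \<mu> * (S + e / (\<mu> + 1))"
      using e \<open>0 \<le> \<mu>\<close> by (intro assms) simp
    also have "\<dots> \<le> \<mu> * S + e"
      using e \<open>0 \<le> \<mu>\<close> by (simp add: field_simps)
    finally show "c \<le> \<mu> * S + e" .
  qed
qed

text \<open>Lagrange multipliers in image space: \<open>K\<close> collects pairs (constraint residual, objective
  value), and \<open>slater\<close> is Slater's condition.\<close>
lemma convex_ex_lagrange_multiplier: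
  fixes K :: "('a::euclidean_space \<times> real) set"
  assumes "convex K"
    and feasible_le: "\<And>t. (0, t) \<in> K \<Longrightarrow> t \<le> S"
    and slater: "D > 0" "\<And>r. norm r \<le> D \<Longrightarrow> (r, t0) \<in> K"
  shows "\<exists>u. \<forall>(r, t)\<in>K. t + u \<bullet> r \<le> S"
proof -
  define T where "T = ({0} \<times> {S<..} :: ('a \<times> real) set)"
  have "K \<noteq> {}" using slater(2)[of 0] slater(1) by auto
  moreover have "convex T" "T \<noteq> {}" by (auto simp: T_def intro!: convex_Times)
  moreover have "K \<inter> T = {}" using feasible_le by (force simp: T_def)
  ultimately obtain p c where "p \<noteq> 0" and pK: "\<forall>q\<in>K. p \<bullet> q \<le> c" and pT: "\<forall>q\<in>T. c \<le> p \<bullet> q"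
    using separating_hyperplane_sets[OF \<open>convex K\<close>] by blast
  obtain u0 \<mu> where p: "p = (u0, \<mu>)" by (cases p)
  have K_le: "u0 \<bullet> r + \<mu> * t \<le> c" if "(r, t) \<in> K" for r t
    using pK that by (auto simp: p)
  have "c \<le> \<mu> * r" if "r > S" for r
    using pT that by (auto simp: p T_def)
  then have \<mu>_nonneg: "0 \<le> \<mu>" and c_le: "c \<le> \<mu> * S"
    using halfline_lower_bound by blast+
  have "\<mu> > 0"
  proof (rule ccontr)
    assume "\<not> \<mu> > 0"
    then have "\<mu> = 0" using \<mu>_nonneg by simp
    then have "u0 \<noteq> 0" using \<open>p \<noteq> 0\<close> by (auto simp: p zero_prod_def)
    define r where "r = (D / norm u0) *\<^sub>R u0"
    have "norm r = D" using \<open>u0 \<noteq> 0\<close> slater by (simp add: r_def)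
    moreover have "u0 \<bullet> r = D * norm u0"
      using \<open>u0 \<noteq> 0\<close> by (simp add: r_def dot_square_norm power2_eq_square)
    ultimately have "D * norm u0 \<le> 0"
      using K_le[OF slater(2)] c_le \<open>\<mu> = 0\<close> by fastforce
    then show False using slater \<open>u0 \<noteq> 0\<close> by (simp add: mult_le_0_iff)
  qed
  have "t + (u0 /\<^sub>R \<mu>) \<bullet> r \<le> S" if "(r, t) \<in> K" for r t
  proof -
    have "\<mu> * (t + (u0 /\<^sub>R \<mu>) \<bullet> r) = u0 \<bullet> r + \<mu> * t"
      using \<open>\<mu> > 0\<close> by (simp add: algebra_simps)
    also have "\<dots> \<le> \<mu> * S" using K_le[OF that] c_le by linarith
    finally show ?thesis using \<open>\<mu> > 0\<close> by simp
  qed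
  then show ?thesis by blast
qed

lemma inner_le_dual_objective:
  fixes a ahat x u :: "real^'n" and B :: "real^'n^'n"
  assumes box: "\<forall>j. lo j \<le> a $ j \<and> a $ j \<le> hi j"
    and ball: "norm (B *v (a - ahat)) \<le> D"
    and nonneg: "\<forall>j. \<alpha> j \<ge> 0 \<and> \<beta> j \<ge> 0"
    and eq: "\<forall>j. \<alpha> j - \<beta> j + column j B \<bullet> u = x $ j"
    and norm_u: "norm u \<le> \<gamma>"
  shows "a \<bullet> x \<le> \<gamma> * D + (\<Sum>j\<in>UNIV. \<alpha> j * (hi j - ahat $ j))
           + (\<Sum>j\<in>UNIV. \<beta> j * (ahat $ j - lo j)) + ahat \<bullet> x"
proof -
  define y where "y = a - ahat"
  have "y \<bullet> x = (\<Sum>j\<in>UNIV. y $ j * (\<alpha> j - \<beta> j) + y $ j * (column j B \<bullet> u))"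
    using eq by (simp add: inner_vec_def flip: distrib_left)
  also have "\<dots> = (\<Sum>j\<in>UNIV. y $ j * (\<alpha> j - \<beta> j)) + (B *v y) \<bullet> u"
    by (simp add: sum.distrib matrix_vector_mult_inner_columns)
  also have "(B *v y) \<bullet> u \<le> norm (B *v y) * norm u"
    by (rule norm_cauchy_schwarz)
  also have "\<dots> \<le> D * \<gamma>"
    using ball norm_u by (intro mult_mono) (auto simp: y_def intro: order_trans[OF norm_ge_zero])
  also have "(\<Sum>j\<in>UNIV. y $ j * (\<alpha> j - \<beta> j))
      \<le> (\<Sum>j\<in>UNIV. \<alpha> j * (hi j - ahat $ j) + \<beta> j * (ahat $ j - lo j))"
  proof (rule sum_mono)
    fix j
    have "y $ j * \<alpha> j \<le> (hi j - ahat $ j) * \<alpha> j" "- y $ j * \<beta> j \<le> (ahat $ j - lo j) * \<beta> j"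
      using box nonneg by (auto simp: y_def intro!: mult_right_mono)
    then show "y $ j * (\<alpha> j - \<beta> j) \<le> \<alpha> j * (hi j - ahat $ j) + \<beta> j * (ahat $ j - lo j)"
      by (simp add: algebra_simps)
  qed
  finally show ?thesis
    by (simp add: y_def inner_diff_left sum.distrib mult.commute)
qed

lemma ex_dual_certificate:
  fixes ahat x :: "real^'n" and B :: "real^'n^'n"
  assumes "D > 0" and center: "\<forall>j. lo j \<le> ahat $ j \<and> ahat $ j \<le> hi j"
    and bound: "\<forall>a. (\<forall>j. lo j \<le> a $ j \<and> a $ j \<le> hi j) \<and> norm (B *v (a - ahat)) \<le> D \<longrightarrow> a \<bullet> x \<le> S"
  shows "\<exists>\<alpha> \<beta> \<gamma> u. (\<forall>j. \<alpha> j \<ge> 0 \<and> \<beta> j \<ge> 0) \<and> (\<forall>j. \<alpha> j - \<beta> j + column j B \<bullet> u = x $ j)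
     \<and> norm u \<le> \<gamma> \<and> \<gamma> * D + (\<Sum>j\<in>UNIV. \<alpha> j * (hi j - ahat $ j))
           + (\<Sum>j\<in>UNIV. \<beta> j * (ahat $ j - lo j)) + ahat \<bullet> x \<le> S"
proof -
  define Y where "Y = cbox (\<chi> j. lo j - ahat $ j) (\<chi> j. hi j - ahat $ j)"
  define K where "K = (\<lambda>(y, z). (B *v y - z, y \<bullet> x)) ` (Y \<times> cball (0::real^'n) D)"
  have "convex K" unfolding K_def Y_def
    by (intro convex_linear_image convex_Times convex_cball convex_box linearI)
      (auto simp: matrix_vector_right_distrib inner_add_left matrix_vector_mult_scaleR
        scaleR_diff_right)
  moreover have "t \<le> S - ahat \<bullet> x" if zero_residual: "(0, t) \<in> K" for t
  proof -
    obtain y z where "y \<in> Y" "norm z \<le> D" "B *v y = z" "t = y \<bullet> x"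
      using zero_residual unfolding K_def by auto
    then have "(ahat + y) \<bullet> x \<le> S"
      using bound[rule_format, of "ahat + y"] by (auto simp: Y_def mem_box_cart algebra_simps)
    then show ?thesis using \<open>t = y \<bullet> x\<close> by (simp add: inner_add_left)
  qed
  moreover have "(r, 0) \<in> K" if "norm r \<le> D" for r
  proof -
    have "0 \<in> Y" using center by (simp add: Y_def mem_box_cart)
    then show ?thesis
      using that unfolding K_def by (intro image_eqI[where x = "(0, - r)"]) auto
  qed
  ultimately obtain u where u: "\<forall>(r, t)\<in>K. t + u \<bullet> r \<le> S - ahat \<bullet> x"
    using convex_ex_lagrange_multiplier[OF _ _ \<open>D > 0\<close>] by blast
  define w where "w = - u"
  define d where "d j = x $ j - column j B \<bullet> w" for j
  define \<alpha> where "\<alpha> j = max (d j) 0" for j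
  define \<beta> where "\<beta> j = max (- d j) 0" for j
  text \<open>The worst case over the box puts each coordinate at the end favoured by the sign of
    \<open>d\<close>, and the worst case over the ball is aligned with \<open>w\<close>.\<close>
  define y where "y = (\<chi> j. if d j \<ge> 0 then hi j - ahat $ j else lo j - ahat $ j)"
  define z where "z = (D / norm w) *\<^sub>R w"
  have "y \<in> Y" using center by (auto simp: Y_def y_def mem_box_cart intro: order_trans)
  moreover have "norm z \<le> D" using \<open>D > 0\<close> by (simp add: z_def)
  ultimately have "(B *v y - z, y \<bullet> x) \<in> K" by (auto simp: K_def)
  then have "y \<bullet> x + u \<bullet> (B *v y - z) \<le> S - ahat \<bullet> x" using u by blast
  moreover have "u \<bullet> (B *v y - z) = D * norm w - w \<bullet> (B *v y)"
    by (cases "w = 0") (simp_all add: w_def z_def inner_diff_right inner_add_right dot_square_norm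
        power2_eq_square)
  moreover have "y \<bullet> x - w \<bullet> (B *v y) = (\<Sum>j\<in>UNIV. y $ j * d j)"
    using matrix_vector_mult_inner_columns[of B y w]
    by (simp add: inner_commute[of w] d_def inner_vec_def right_diff_distrib sum_subtractf mult_ac)
  moreover have "\<dots> = (\<Sum>j\<in>UNIV. \<alpha> j * (hi j - ahat $ j)) + (\<Sum>j\<in>UNIV. \<beta> j * (ahat $ j - lo j))"
    unfolding sum.distrib[symmetric]
    by (intro sum.cong) (auto simp: y_def \<alpha>_def \<beta>_def max_def algebra_simps)
  ultimately have "norm w * D + (\<Sum>j\<in>UNIV. \<alpha> j * (hi j - ahat $ j))
      + (\<Sum>j\<in>UNIV. \<beta> j * (ahat $ j - lo j)) + ahat \<bullet> x \<le> S"
    by (simp add: mult.commute)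
  moreover have "\<forall>j. \<alpha> j - \<beta> j + column j B \<bullet> w = x $ j" "\<forall>j. \<alpha> j \<ge> 0 \<and> \<beta> j \<ge> 0"
    by (auto simp: \<alpha>_def \<beta>_def d_def max_def)
  ultimately show ?thesis by blast
qed

section \<open>Ambiguity sets defined by nested level sets\<close>

lemma ex_pmf_with_weights:
  fixes q :: "nat \<Rightarrow> real"
  assumes nonneg: "\<forall>i\<le>l. 0 \<le> q i" and sum_one: "(\<Sum>i\<le>l. q i) = 1"
  shows "\<exists>pq. \<forall>i. pmf pq i = (if i \<le> l then q i else 0)"
proof -
  define xs where "xs = map (\<lambda>i. (i, q i)) [0..<Suc l]"
  have "sum_list (map snd xs) = sum q {..l}"
    by (simp add: xs_def o_def sum_list_distinct_conv_sum_set atLeast0LessThan lessThan_Suc_atMost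
        del: upt_Suc)
  then have wf: "pmf_of_list_wf xs"
    using nonneg sum_one by (intro pmf_of_list_wfI) (auto simp: xs_def)
  have "pmf (pmf_of_list xs) i = (if i \<le> l then q i else 0)" for i
  proof -
    have "filter (\<lambda>k. k = i) [0..<n] = (if i < n then [i] else [])" for n
      by (induct n) auto
    then have "filter (\<lambda>z. fst z = i) xs = (if i \<le> l then [(i, q i)] else [])"
      by (simp add: xs_def filter_map o_def del: upt_Suc)
    then show ?thesis by (simp add: pmf_pmf_of_list[OF wf])
  qed
  then show ?thesis by blast
qed

text \<open>The term \<open>k = 0\<close> of the middle sum vanishes because \<open>0 - 1 = 0\<close> in \<open>nat\<close>.\<close>
lemma summation_by_parts_atMost:
  fixes P S :: "nat \<Rightarrow> real"
  shows "(\<Sum>i\<le>n. (P i - P (Suc i)) * S i)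
    = P 0 * S 0 - (\<Sum>k\<le>n. P k * (S (k - 1) - S k)) - P (Suc n) * S n"
  by (induct n) (simp_all add: algebra_simps)

lemma telescope_atMost_pred:
  fixes S :: "nat \<Rightarrow> real"
  shows "S 0 - (\<Sum>k\<le>i. S (k - 1) - S k) = S i"
  by (induct i) simp_all

locale nested_levels =
  fixes C :: "nat \<Rightarrow> 'a::t2_space set" and p :: "nat \<Rightarrow> real" and l :: nat
  assumes compact_level: "\<And>i. i \<le> l \<Longrightarrow> compact (C i)"
    and level_nonempty: "\<And>i. i \<le> l \<Longrightarrow> C i \<noteq> {}"
    and level_antimono: "\<And>i k. i \<le> k \<Longrightarrow> k \<le> l \<Longrightarrow> C k \<subseteq> C i"
    and p_0: "p 0 = 1"
    and p_antimono: "\<And>i k. i \<le> k \<Longrightarrow> k \<le> l \<Longrightarrow> p k \<le> p i"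
    and p_nonneg: "0 \<le> p l"
begin

definition ambiguity_set :: "'a measure set" where
  "ambiguity_set = {P. sets P = sets borel \<and> prob_space P \<and> (\<forall>i\<le>l. p i \<le> measure P (C i))}"

definition tail_prob :: "nat \<Rightarrow> real" where
  "tail_prob i = (if i \<le> l then p i else 0)"

definition level_mass :: "nat \<Rightarrow> real" where
  "level_mass i = tail_prob i - tail_prob (Suc i)"

lemma level_mass_nonneg: "0 \<le> level_mass i"
  unfolding level_mass_def tail_prob_def
  using p_antimono[of i "Suc i"] p_nonneg by (cases "i = l") auto

lemma sum_level_mass:
  assumes "k \<le> l"
  shows "(\<Sum>i=k..l. level_mass i) = p k"
proof -
  have "(\<Sum>i=k..l. level_mass i) = - (\<Sum>i=k..l. tail_prob (Suc i) - tail_prob i)"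
    by (simp add: level_mass_def flip: sum_negf)
  also have "\<dots> = p k"
    using assms by (subst sum_Suc_diff) (simp_all add: tail_prob_def)
  finally show ?thesis .
qed

lemma ex_worst_case_measure:
  assumes A: "\<And>i. i \<le> l \<Longrightarrow> A i \<in> C i"
  shows "\<exists>M\<in>ambiguity_set. \<forall>g\<in>borel_measurable borel.
    integral\<^sup>L M g = (\<Sum>i\<le>l. level_mass i * g (A i))"
proof -
  have "(\<Sum>i\<le>l. level_mass i) = 1"
    using sum_level_mass[of 0] p_0 by (simp add: atLeast0AtMost)
  then obtain pq where pq: "\<And>i. pmf pq i = (if i \<le> l then level_mass i else 0)"
    using ex_pmf_with_weights[of l level_mass] level_mass_nonneg by blast
  define M where "M = distr (measure_pmf pq) borel A"
  have integral_M: "integral\<^sup>L M g = (\<Sum>i\<le>l. level_mass i * g (A i))"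
    if "g \<in> borel_measurable borel" for g :: "'a \<Rightarrow> real"
  proof -
    have "integral\<^sup>L M g = integral\<^sup>L (measure_pmf pq) (\<lambda>i. g (A i))"
      unfolding M_def using that by (intro integral_distr) simp_all
    also have "\<dots> = (\<Sum>i\<le>l. g (A i) * pmf pq i)"
      by (rule integral_measure_pmf_real) (auto simp: set_pmf_iff pq split: if_splits)
    finally show ?thesis by (simp add: pq mult.commute)
  qed
  have "p k \<le> measure M (C k)" if "k \<le> l" for k
  proof -
    have "p k = (\<Sum>i=k..l. level_mass i)"
      using sum_level_mass[OF that] by simp
    also have "\<dots> = (\<Sum>i=k..l. indicator (C k) (A i) * level_mass i)"
      using A level_antimono[of k] by (intro sum.cong) (auto simp: indicator_def)
    also have "\<dots> \<le> (\<Sum>i\<le>l. indicator (C k) (A i) * level_mass i)"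
      by (intro sum_mono2) (auto simp: level_mass_nonneg)
    also have "\<dots> = integral\<^sup>L M (indicator (C k))"
      using compact_level[OF that]
      by (subst integral_M) (auto simp: borel_closed compact_imp_closed mult.commute)
    also have "\<dots> = measure M (C k)"
      by (simp add: M_def)
    finally show ?thesis .
  qed
  moreover have "prob_space M"
    unfolding M_def by (rule measure_pmf.prob_space_distr) simp
  ultimately have "M \<in> ambiguity_set"
    by (simp add: ambiguity_set_def M_def)
  with integral_M show ?thesis by blast
qed

lemma sum_indicator_levels:
  fixes v :: "nat \<Rightarrow> real"
  assumes "a \<in> C 0"
  obtains m where "m \<le> l" "a \<in> C m" "(\<Sum>k\<le>l. v k * indicator (C k) a) = (\<Sum>k\<le>m. v k)"
proof -
  define m where "m = Max {k. k \<le> l \<and> a \<in> C k}"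
  have "m \<in> {k. k \<le> l \<and> a \<in> C k}"
    unfolding m_def using assms by (intro Max_in) (auto intro: finite_subset[of _ "{..l}"])
  then have m: "m \<le> l \<and> a \<in> C m" by simp
  have below_m: "a \<in> C k \<longleftrightarrow> k \<le> m" if "k \<le> l" for k
    using m level_antimono[of k m] that by (auto simp: m_def intro: Max_ge)
  have "(\<Sum>k\<le>l. v k * indicator (C k) a) = (\<Sum>k\<le>l. if k \<in> {..m} then v k else 0)"
    by (intro sum.cong) (auto simp: below_m indicator_def)
  also have "\<dots> = (\<Sum>k\<in>{..l} \<inter> {..m}. v k)"
    by (rule sum.inter_restrict[symmetric]) simp
  also have "{..l} \<inter> {..m} = {..m}" using m by auto
  finally show ?thesis using m that by blast
qed

lemma integral_le_of_staircase_bound: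
  assumes P: "P \<in> ambiguity_set" and f: "continuous_on UNIV f"
    and v: "\<forall>i\<le>l. 0 \<le> v i"
    and bound: "\<forall>i\<le>l. \<forall>a\<in>C i. f a \<le> w - (\<Sum>k\<le>i. v k)"
  shows "integral\<^sup>L P f \<le> w - (\<Sum>i\<le>l. p i * v i)"
proof -
  interpret P: prob_space P using P by (simp add: ambiguity_set_def)
  have sets_P: "sets P = sets borel" using P by (simp add: ambiguity_set_def)
  have level_sets: "C k \<in> sets P" if "k \<le> l" for k
    using compact_level[OF that] sets_P by (simp add: borel_closed compact_imp_closed)
  have "p 0 \<le> P.prob (C 0)"
    using P by (simp add: ambiguity_set_def)
  then have "P.prob (C 0) = 1"
    using p_0 P.prob_le_1[of "C 0"] by linarith
  then have AE_C0: "AE a in P. a \<in> C 0"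
    using P.AE_in_set_eq_1[OF level_sets] by simp
  have "integrable P f"
  proof -
    obtain K where "\<forall>a\<in>C 0. norm (f a) \<le> K"
      using compact_imp_bounded[OF compact_continuous_image[OF continuous_on_subset[OF f]
            compact_level]] by (auto simp: bounded_iff)
    moreover have "f \<in> borel_measurable P"
      using f by (simp add: measurable_cong_sets[OF sets_P refl] borel_measurable_continuous_onI)
    ultimately show ?thesis
      using AE_C0 by (intro P.integrable_const_bound[of _ K]) auto
  qed
  define \<phi> where "\<phi> a = w - (\<Sum>k\<le>l. v k * indicator (C k) a)" for a
  have steps: "integrable P (\<lambda>a. \<Sum>k\<le>l. v k * indicator (C k) a)"
    using level_sets
    by (intro Bochner_Integration.integrable_sum integrable_mult_right integrable_real_indicator)
      (auto simp: less_top[symmetric])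
  have "f a \<le> \<phi> a" if "a \<in> C 0" for a
    using bound sum_indicator_levels[OF that, of v] by (metis \<phi>_def)
  then have "integral\<^sup>L P f \<le> integral\<^sup>L P \<phi>"
    using \<open>integrable P f\<close> steps AE_C0 unfolding \<phi>_def
    by (intro integral_mono_AE Bochner_Integration.integrable_diff P.integrable_const) auto
  also have "integral\<^sup>L P \<phi> = w - (\<Sum>k\<le>l. v k * measure P (C k))"
    unfolding \<phi>_def using level_sets
    by (subst Bochner_Integration.integral_diff[OF P.integrable_const steps],
        subst Bochner_Integration.integral_sum)
      (auto simp: P.prob_space less_top[symmetric])
  also have "\<dots> \<le> w - (\<Sum>i\<le>l. p i * v i)"
    using P v by (auto simp: ambiguity_set_def mult.commute[of "p _"] intro!: sum_mono mult_left_mono)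
  finally show ?thesis .
qed

theorem sup_integral_le_iff:
  assumes f: "continuous_on UNIV f"
  shows "(SUP P\<in>ambiguity_set. ereal (integral\<^sup>L P f)) \<le> ereal b \<longleftrightarrow>
    (\<exists>w v. (\<forall>i\<le>l. 0 \<le> v i) \<and> w - (\<Sum>i\<le>l. p i * v i) \<le> b
      \<and> (\<forall>i\<le>l. \<forall>a\<in>C i. f a \<le> w - (\<Sum>k\<le>i. v k)))"
    (is "_ \<longleftrightarrow> (\<exists>w v. ?dual w v)")
proof
  assume sup_le: "(SUP P\<in>ambiguity_set. ereal (integral\<^sup>L P f)) \<le> ereal b"
  have "\<forall>i\<in>{..l}. \<exists>a. a \<in> C i \<and> (\<forall>c\<in>C i. f c \<le> f a)"
    using continuous_attains_sup[OF compact_level level_nonempty continuous_on_subset[OF f]]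
    by blast
  from bchoice[OF this] obtain A where A: "\<And>i. i \<le> l \<Longrightarrow> A i \<in> C i"
    and A_max: "\<And>i c. i \<le> l \<Longrightarrow> c \<in> C i \<Longrightarrow> f c \<le> f (A i)"
    by auto
  obtain M where "M \<in> ambiguity_set" and M: "integral\<^sup>L M f = (\<Sum>i\<le>l. level_mass i * f (A i))"
    using ex_worst_case_measure[OF A] borel_measurable_continuous_onI[OF f] by blast
  from SUP_upper[OF this(1)] sup_le have "ereal (integral\<^sup>L M f) \<le> ereal b"
    by (rule order_trans)
  then have worst_le: "(\<Sum>i\<le>l. level_mass i * f (A i)) \<le> b"
    using M by simp
  define v where "v k = f (A (k - 1)) - f (A k)" for k
  have "(\<Sum>i\<le>l. tail_prob i * v i) = (\<Sum>i\<le>l. p i * v i)"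
    by (intro sum.cong) (simp_all add: tail_prob_def)
  then have "(\<Sum>i\<le>l. level_mass i * f (A i)) = f (A 0) - (\<Sum>i\<le>l. p i * v i)"
    using summation_by_parts_atMost[of tail_prob "\<lambda>i. f (A i)" l]
    by (simp add: level_mass_def v_def p_0 tail_prob_def)
  moreover have "0 \<le> v i" if "i \<le> l" for i
    using A level_antimono[of "i - 1" i] A_max[of "i - 1"] that by (force simp: v_def)
  moreover have "f (A 0) - (\<Sum>k\<le>i. v k) = f (A i)" for i
    unfolding v_def by (rule telescope_atMost_pred)
  ultimately have "?dual (f (A 0)) v"
    using worst_le A_max by auto
  then show "\<exists>w v. ?dual w v" by blast
next
  assume "\<exists>w v. ?dual w v"
  then obtain w v where v: "\<forall>i\<le>l. 0 \<le> v i" and "w - (\<Sum>i\<le>l. p i * v i) \<le> b"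
    and "\<forall>i\<le>l. \<forall>a\<in>C i. f a \<le> w - (\<Sum>k\<le>i. v k)"
    by blast
  then have "integral\<^sup>L P f \<le> b" if "P \<in> ambiguity_set" for P
    using integral_le_of_staircase_bound[OF that f v] by fastforce
  then show "(SUP P\<in>ambiguity_set. ereal (integral\<^sup>L P f)) \<le> ereal b"
    by (simp add: SUP_least)
qed

end

section \<open>Cuts of the fuzzy data\<close>

locale fuzzy_interval =
  fixes p :: "real \<Rightarrow> real" and ah lw uw :: real
  assumes lw_pos: "lw > 0" and uw_pos: "uw > 0"
    and peak: "p ah = 1"
    and support: "\<And>t. t \<notin> {ah - lw <..< ah + uw} \<Longrightarrow> p t = 0"
    and increasing: "strict_mono_on {ah - lw .. ah} p"
    and decreasing: "strict_antimono_on {ah .. ah + uw} p"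
begin

lemma cut_subset_support: "0 < lam \<Longrightarrow> p t \<ge> lam \<Longrightarrow> ah - lw < t \<and> t < ah + uw"
  using support by force

lemma bdd_below_cut: "0 < lam \<Longrightarrow> bdd_below {t. p t \<ge> lam}"
  by (rule bdd_belowI[of _ "ah - lw"]) (use cut_subset_support in force)

lemma bdd_above_cut: "0 < lam \<Longrightarrow> bdd_above {t. p t \<ge> lam}"
  by (rule bdd_aboveI[of _ "ah + uw"]) (use cut_subset_support in force)

lemma lcut_le_center: "0 \<le> lam \<Longrightarrow> lam \<le> 1 \<Longrightarrow> lcut p ah lw lam \<le> ah"
  unfolding lcut_def using lw_pos peak bdd_below_cut by (auto intro!: cInf_lower)

lemma center_le_ucut: "0 \<le> lam \<Longrightarrow> lam \<le> 1 \<Longrightarrow> ah \<le> ucut p ah uw lam"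
  unfolding ucut_def using uw_pos peak bdd_above_cut by (auto intro!: cSup_upper)

lemma lcut_mono:
  assumes "0 \<le> lam" "lam \<le> mu" "mu \<le> 1"
  shows "lcut p ah lw lam \<le> lcut p ah lw mu"
proof (cases "mu = 0")
  case False
  then have "0 < mu" using assms by simp
  have "mu \<le> p ah" using peak assms by simp
  then have "ah - lw \<le> Inf {t. p t \<ge> mu}"
    using \<open>0 < mu\<close> cut_subset_support[of mu]
    by (intro cInf_greatest) (auto intro: less_imp_le)
  moreover have "Inf {t. p t \<ge> lam} \<le> Inf {t. p t \<ge> mu}" if "0 < lam"
    using that \<open>mu \<le> p ah\<close> assms by (intro cInf_superset_mono bdd_below_cut) auto
  ultimately show ?thesis
    using False assms by (auto simp: lcut_def)
qed (use assms in \<open>simp add: lcut_def\<close>)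

lemma ucut_antimono:
  assumes "0 \<le> lam" "lam \<le> mu" "mu \<le> 1"
  shows "ucut p ah uw mu \<le> ucut p ah uw lam"
proof (cases "mu = 0")
  case False
  then have "0 < mu" using assms by simp
  have "mu \<le> p ah" using peak assms by simp
  then have "Sup {t. p t \<ge> mu} \<le> ah + uw"
    using \<open>0 < mu\<close> cut_subset_support[of mu]
    by (intro cSup_least) (auto intro: less_imp_le)
  moreover have "Sup {t. p t \<ge> mu} \<le> Sup {t. p t \<ge> lam}" if "0 < lam"
    using that \<open>mu \<le> p ah\<close> assms by (intro cSup_subset_mono bdd_above_cut) auto
  ultimately show ?thesis
    using False assms by (auto simp: ucut_def)
qed (use assms in \<open>simp add: ucut_def\<close>)

lemma cut_one: "{t. p t \<ge> 1} = {ah}"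
proof safe
  fix t assume t: "1 \<le> p t"
  then have t_supp: "ah - lw < t \<and> t < ah + uw"
    using cut_subset_support[of 1 t] by simp
  show "t = ah"
  proof (rule ccontr)
    assume "t \<noteq> ah"
    then have "p t < p ah"
      using increasing decreasing t_supp
      by (cases "t < ah") (auto simp: strict_mono_on_def monotone_on_def)
    then show False using t peak by simp
  qed
qed (use peak in simp)

lemma lcut_one: "lcut p ah lw 1 = ah"
  by (simp add: lcut_def cut_one)

lemma ucut_one: "ucut p ah uw 1 = ah"
  by (simp add: ucut_def cut_one)

end

locale fuzzy_radius =
  fixes pd :: "real \<Rightarrow> real" and G :: real
  assumes G_pos: "G > 0" and at_zero: "pd 0 = 1"
    and support: "\<And>t. t \<ge> G \<Longrightarrow> pd t = 0"
    and continuous: "continuous_on {0..} pd"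
begin

lemma cut_less: "0 < lam \<Longrightarrow> pd t \<ge> lam \<Longrightarrow> t < G"
  using support[of t] by (cases "G \<le> t") auto

lemma bdd_above_cut: "0 < lam \<Longrightarrow> bdd_above {t. t \<ge> 0 \<and> pd t \<ge> lam}"
  by (rule bdd_aboveI[of _ G]) (use cut_less in force)

lemma dcut_nonneg: "0 \<le> lam \<Longrightarrow> lam \<le> 1 \<Longrightarrow> 0 \<le> dcut pd G lam"
  unfolding dcut_def using G_pos at_zero bdd_above_cut by (auto intro!: cSup_upper)

lemma dcut_antimono:
  assumes "0 \<le> lam" "lam \<le> mu" "mu \<le> 1"
  shows "dcut pd G mu \<le> dcut pd G lam"
proof (cases "mu = 0")
  case False
  then have "0 < mu" using assms by simp
  have "mu \<le> pd 0" using at_zero assms by simp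
  then have "Sup {t. t \<ge> 0 \<and> pd t \<ge> mu} \<le> G"
    using \<open>0 < mu\<close> cut_less[of mu]
    by (intro cSup_least) (auto intro: less_imp_le)
  moreover have "Sup {t. t \<ge> 0 \<and> pd t \<ge> mu} \<le> Sup {t. t \<ge> 0 \<and> pd t \<ge> lam}" if "0 < lam"
    using that at_zero assms by (intro cSup_subset_mono bdd_above_cut) auto
  ultimately show ?thesis
    using False assms by (auto simp: dcut_def)
qed (use assms in \<open>simp add: dcut_def\<close>)

text \<open>Continuity at \<open>0\<close> is what makes the ball of every level below \<open>1\<close> nondegenerate.\<close>
lemma dcut_pos:
  assumes "0 \<le> lam" "lam < 1"
  shows "0 < dcut pd G lam"
proof (cases "lam = 0")
  case False
  have "continuous (at 0 within {0..}) pd"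
    using continuous by (simp add: continuous_on_eq_continuous_within)
  then obtain d where "d > 0" and d: "\<And>t. t \<in> {0..} \<Longrightarrow> dist t 0 < d \<Longrightarrow> dist (pd t) (pd 0) < 1 - lam"
    using assms unfolding continuous_within_eps_delta by (metis diff_gt_0_iff_gt)
  have "dist (pd (d/2)) (pd 0) < 1 - lam"
    using \<open>d > 0\<close> by (intro d) auto
  then have "pd (d/2) \<ge> lam"
    using at_zero by (simp add: dist_real_def abs_if split: if_splits)
  then have "d/2 \<le> Sup {t. t \<ge> 0 \<and> pd t \<ge> lam}"
    using \<open>d > 0\<close> False assms by (intro cSup_upper bdd_above_cut) auto
  then show ?thesis
    using \<open>d > 0\<close> False by (simp add: dcut_def)
qed (use G_pos in \<open>simp add: dcut_def\<close>)

end

section \<open>Level sets of the joint possibility distribution\<close>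

lemma compact_Cset: "compact (Cset pa ahat lw uw pd \<Gamma> B lam)"
proof -
  define lo where "lo j = lcut (pa j) (ahat $ j) (lw $ j) lam" for j
  define hi where "hi j = ucut (pa j) (ahat $ j) (uw $ j) lam" for j
  have C: "Cset pa ahat lw uw pd \<Gamma> B lam
      = {a. \<forall>j. lo j \<le> a $ j \<and> a $ j \<le> hi j} \<inter> {a. norm (B *v a - B *v ahat) \<le> dcut pd \<Gamma> lam}"
    by (auto simp: Cset_def lo_def hi_def matrix_vector_mult_diff_distrib)
  have "closed (Cset pa ahat lw uw pd \<Gamma> B lam)"
    unfolding C by (intro closed_Int closed_Collect_all closed_Collect_conj closed_Collect_le
        continuous_intros)
  moreover have "Cset pa ahat lw uw pd \<Gamma> B lam \<subseteq> cbox (\<chi> j. lo j) (\<chi> j. hi j)"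
    by (auto simp: C mem_box_cart)
  ultimately show ?thesis
    using bounded_subset[OF bounded_cbox] by (simp add: compact_eq_bounded_closed)
qed

locale fuzzy_levels =
  fixes pa :: "'n::finite \<Rightarrow> real \<Rightarrow> real" and ahat lw uw :: "real^'n"
    and pd :: "real \<Rightarrow> real" and \<Gamma> :: real and B :: "real^'n^'n"
  assumes interval: "\<And>j. fuzzy_interval (pa j) (ahat $ j) (lw $ j) (uw $ j)"
    and radius: "fuzzy_radius pd \<Gamma>"
begin

abbreviation level :: "real \<Rightarrow> (real^'n) set" where
  "level lam \<equiv> Cset pa ahat lw uw pd \<Gamma> B lam"

abbreviation lo :: "real \<Rightarrow> 'n \<Rightarrow> real" where
  "lo lam j \<equiv> lcut (pa j) (ahat $ j) (lw $ j) lam"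

abbreviation hi :: "real \<Rightarrow> 'n \<Rightarrow> real" where
  "hi lam j \<equiv> ucut (pa j) (ahat $ j) (uw $ j) lam"

lemma center_in_level: "0 \<le> lam \<Longrightarrow> lam \<le> 1 \<Longrightarrow> ahat \<in> level lam"
  using fuzzy_interval.lcut_le_center[OF interval] fuzzy_interval.center_le_ucut[OF interval]
    fuzzy_radius.dcut_nonneg[OF radius]
  by (simp add: Cset_def)

lemma level_antimono:
  assumes "0 \<le> lam" "lam \<le> mu" "mu \<le> 1"
  shows "level mu \<subseteq> level lam"
  using fuzzy_interval.lcut_mono[OF interval assms] fuzzy_interval.ucut_antimono[OF interval assms]
    fuzzy_radius.dcut_antimono[OF radius assms]
  by (auto simp: Cset_def intro: order_trans)

lemma level_inner_le_iff:
  assumes "0 \<le> lam" "lam \<le> 1"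
  shows "(\<forall>a\<in>level lam. a \<bullet> x \<le> t) \<longleftrightarrow>
    (\<exists>\<alpha> \<beta> \<gamma> u. (\<forall>j. \<alpha> j \<ge> 0 \<and> \<beta> j \<ge> 0) \<and> (\<forall>j. \<alpha> j - \<beta> j + column j B \<bullet> u = x $ j)
      \<and> norm u \<le> \<gamma> \<and> \<gamma> * dcut pd \<Gamma> lam + (\<Sum>j\<in>UNIV. \<alpha> j * (hi lam j - ahat $ j))
           + (\<Sum>j\<in>UNIV. \<beta> j * (ahat $ j - lo lam j)) + ahat \<bullet> x \<le> t)"
    (is "?primal \<longleftrightarrow> (\<exists>\<alpha> \<beta> \<gamma> u. ?dual \<alpha> \<beta> \<gamma> u)")
proof
  assume primal: ?primal
  show "\<exists>\<alpha> \<beta> \<gamma> u. ?dual \<alpha> \<beta> \<gamma> u"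
  proof (cases "lam = 1")
    case True
    text \<open>Here the box is the single point \<open>ahat\<close> and the ball may have radius \<open>0\<close>, so
      Slater's condition fails, but no multiplier of the ball is needed.\<close>
    have "ahat \<bullet> x \<le> t"
      using primal center_in_level assms by blast
    moreover have "lo lam j = ahat $ j" "hi lam j = ahat $ j" for j
      using fuzzy_interval.lcut_one[OF interval] fuzzy_interval.ucut_one[OF interval] True
      by simp_all
    ultimately have "?dual (\<lambda>j. max (x $ j) 0) (\<lambda>j. max (- x $ j) 0) 0 0"
      by (simp add: max_def)
    then show ?thesis by (intro exI)
  next
    case False
    have "0 < dcut pd \<Gamma> lam"
      using fuzzy_radius.dcut_pos[OF radius] assms False by simp
    moreover have "\<forall>j. lo lam j \<le> ahat $ j \<and> ahat $ j \<le> hi lam j"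
      using fuzzy_interval.lcut_le_center[OF interval] fuzzy_interval.center_le_ucut[OF interval]
        assms by simp
    moreover have "\<forall>a. (\<forall>j. lo lam j \<le> a $ j \<and> a $ j \<le> hi lam j)
        \<and> norm (B *v (a - ahat)) \<le> dcut pd \<Gamma> lam \<longrightarrow> a \<bullet> x \<le> t"
      using primal by (simp add: Cset_def)
    ultimately show ?thesis
      by (rule ex_dual_certificate)
  qed
next
  assume "\<exists>\<alpha> \<beta> \<gamma> u. ?dual \<alpha> \<beta> \<gamma> u"
  then obtain \<alpha> \<beta> \<gamma> u where dual: "?dual \<alpha> \<beta> \<gamma> u" by blast
  show ?primal
  proof
    fix a assume "a \<in> level lam"
    then have "a \<bullet> x \<le> \<gamma> * dcut pd \<Gamma> lam + (\<Sum>j\<in>UNIV. \<alpha> j * (hi lam j - ahat $ j))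
           + (\<Sum>j\<in>UNIV. \<beta> j * (ahat $ j - lo lam j)) + ahat \<bullet> x"
      using dual by (intro inner_le_dual_objective) (auto simp: Cset_def)
    then show "a \<bullet> x \<le> t" using dual by linarith
  qed
qed

lemma staircase_dual_iff:
  assumes lam: "\<And>i. i \<le> l \<Longrightarrow> 0 \<le> lam i \<and> lam i \<le> 1"
  shows "(\<exists>w v. (\<forall>i\<le>l. 0 \<le> v i) \<and> w - (\<Sum>i\<le>l. p i * v i) \<le> b
      \<and> (\<forall>i\<le>l. \<forall>a\<in>level (lam i). a \<bullet> x \<le> w - (\<Sum>k\<le>i. v k))) \<longleftrightarrow>
    (\<exists>w v \<gamma> u \<alpha> \<beta>. (\<forall>i\<le>l. v i \<ge> 0 \<and> \<gamma> i \<ge> 0 \<and> (\<forall>j. \<alpha> i j \<ge> 0 \<and> \<beta> i j \<ge> 0)) \<and>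
       w - (\<Sum>i\<le>l. p i * v i) \<le> b \<and>
       (\<forall>i\<le>l. \<gamma> i * dcut pd \<Gamma> (lam i) + (\<Sum>j\<in>UNIV. \<alpha> i j * (hi (lam i) j - ahat $ j))
                + (\<Sum>j\<in>UNIV. \<beta> i j * (ahat $ j - lo (lam i) j)) + ahat \<bullet> x
              \<le> w - (\<Sum>k\<le>i. v k)) \<and>
       (\<forall>i\<le>l. \<forall>j. \<alpha> i j - \<beta> i j + column j B \<bullet> u i = x $ j) \<and>
       (\<forall>i\<le>l. norm (u i) \<le> \<gamma> i))"
    (is "(\<exists>w v. ?primal w v) \<longleftrightarrow> (\<exists>w v \<gamma> u \<alpha> \<beta>. ?dual w v \<gamma> u \<alpha> \<beta>)")
proof
  assume "\<exists>w v. ?primal w v"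
  then obtain w v where primal: "?primal w v" by (elim exE)
  have "\<forall>i. i \<le> l \<longrightarrow> (\<exists>\<alpha> \<beta> \<gamma> u. (\<forall>j. \<alpha> j \<ge> 0 \<and> \<beta> j \<ge> 0)
      \<and> (\<forall>j. \<alpha> j - \<beta> j + column j B \<bullet> u = x $ j) \<and> norm u \<le> \<gamma>
      \<and> \<gamma> * dcut pd \<Gamma> (lam i) + (\<Sum>j\<in>UNIV. \<alpha> j * (hi (lam i) j - ahat $ j))
           + (\<Sum>j\<in>UNIV. \<beta> j * (ahat $ j - lo (lam i) j)) + ahat \<bullet> x \<le> w - (\<Sum>k\<le>i. v k))"
    (is "\<forall>i. i \<le> l \<longrightarrow> ?level_dual i")
  proof (intro allI impI)
    fix i assume "i \<le> l"
    with lam have "0 \<le> lam i" "lam i \<le> 1" by auto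
    then show "?level_dual i"
      by (rule iffD1[OF level_inner_le_iff]) (use primal \<open>i \<le> l\<close> in simp)
  qed
  then obtain \<alpha> \<beta> \<gamma> u where "\<forall>i. i \<le> l \<longrightarrow> (\<forall>j. \<alpha> i j \<ge> 0 \<and> \<beta> i j \<ge> 0)
      \<and> (\<forall>j. \<alpha> i j - \<beta> i j + column j B \<bullet> u i = x $ j) \<and> norm (u i) \<le> \<gamma> i
      \<and> \<gamma> i * dcut pd \<Gamma> (lam i) + (\<Sum>j\<in>UNIV. \<alpha> i j * (hi (lam i) j - ahat $ j))
           + (\<Sum>j\<in>UNIV. \<beta> i j * (ahat $ j - lo (lam i) j)) + ahat \<bullet> x \<le> w - (\<Sum>k\<le>i. v k)"
    unfolding choice_iff' by (elim exE)
  then have "?dual w v \<gamma> u \<alpha> \<beta>"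
    using primal by (auto intro: order_trans[OF norm_ge_zero])
  then show "\<exists>w v \<gamma> u \<alpha> \<beta>. ?dual w v \<gamma> u \<alpha> \<beta>" by (intro exI)
next
  assume "\<exists>w v \<gamma> u \<alpha> \<beta>. ?dual w v \<gamma> u \<alpha> \<beta>"
  then obtain w v \<gamma> u \<alpha> \<beta> where dual: "?dual w v \<gamma> u \<alpha> \<beta>" by (elim exE)
  have "\<forall>a\<in>level (lam i). a \<bullet> x \<le> w - (\<Sum>k\<le>i. v k)" if "i \<le> l" for i
  proof -
    from lam[OF that] have "0 \<le> lam i" "lam i \<le> 1" by auto
    then show ?thesis
      using dual that
      by (intro iffD2[OF level_inner_le_iff] exI[of _ "\<alpha> i"] exI[of _ "\<beta> i"] exI[of _ "\<gamma> i"]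
          exI[of _ "u i"]) auto
  qed
  then have "?primal w v" using dual by auto
  then show "\<exists>w v. ?primal w v" by (intro exI)
qed

end

lemma g_rho_0: "0 < \<rho> \<Longrightarrow> g_rho \<rho> 0 = 0"
  by (simp add: g_rho_def)

lemma g_rho_1: "0 < \<rho> \<Longrightarrow> \<rho> < 1 \<Longrightarrow> g_rho \<rho> 1 = 1"
  by (simp add: g_rho_def)

lemma g_rho_mono: "0 < \<rho> \<Longrightarrow> \<rho> < 1 \<Longrightarrow> s \<le> t \<Longrightarrow> g_rho \<rho> s \<le> g_rho \<rho> t"
  by (auto simp: g_rho_def intro!: divide_right_mono powr_mono')

theorem mainTheorem9:
  fixes pa :: "'n::finite \<Rightarrow> real \<Rightarrow> real"
    and ahat lw uw :: "real^'n"
    and pd :: "real \<Rightarrow> real" and \<Gamma> :: real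
    and B :: "real^'n^'n"
    and \<rho> :: real and l :: nat
    and x :: "real^'n" and b :: real
  assumes lw_pos: "\<forall>j. lw $ j > 0" and uw_pos: "\<forall>j. uw $ j > 0"
    and pa_cont: "\<forall>j. continuous_on UNIV (pa j)"
    and pa_range: "\<forall>j t. 0 \<le> pa j t \<and> pa j t \<le> 1"
    and pa_peak: "\<forall>j. pa j (ahat $ j) = 1"
    and pa_supp: "\<forall>j t. t \<notin> {ahat $ j - lw $ j <..< ahat $ j + uw $ j} \<longrightarrow> pa j t = 0"
    and pa_inc: "\<forall>j. strict_mono_on {ahat $ j - lw $ j .. ahat $ j} (pa j)"
    and pa_dec: "\<forall>j. strict_antimono_on {ahat $ j .. ahat $ j + uw $ j} (pa j)"
    and Gamma_pos: "\<Gamma> > 0"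
    and pd_cont: "continuous_on {0..} pd"
    and pd_range: "\<forall>t\<ge>0. 0 \<le> pd t \<and> pd t \<le> 1"
    and pd_zero: "pd 0 = 1"
    and pd_dec: "strict_antimono_on {0..\<Gamma>} pd"
    and pd_supp: "\<forall>t\<ge>\<Gamma>. pd t = 0"
    and rho: "0 < \<rho>" "\<rho> < 1"
    and l: "l \<ge> 1"
  shows "(SUP P \<in> Pset l \<rho> pa ahat lw uw pd \<Gamma> B. ereal (integral\<^sup>L P (\<lambda>a. a \<bullet> x))) \<le> ereal b
    \<longleftrightarrow>
    (\<exists>(w::real) (v::nat \<Rightarrow> real) (\<gamma>::nat \<Rightarrow> real) (u::nat \<Rightarrow> real^'n) (\<alpha>::nat \<Rightarrow> 'n \<Rightarrow> real) (\<beta>::nat \<Rightarrow> 'n \<Rightarrow> real).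
       (\<forall>i\<le>l. v i \<ge> 0 \<and> \<gamma> i \<ge> 0 \<and> (\<forall>j. \<alpha> i j \<ge> 0 \<and> \<beta> i j \<ge> 0)) \<and>
       w + (\<Sum>i\<le>l. (g_rho \<rho> (real i / real l) - 1) * v i) \<le> b \<and>
       (\<forall>i\<le>l. \<gamma> i * dcut pd \<Gamma> (real i / real l)
                + (\<Sum>j\<in>UNIV. \<alpha> i j * (ucut (pa j) (ahat $ j) (uw $ j) (real i / real l) - ahat $ j))
                + (\<Sum>j\<in>UNIV. \<beta> i j * (ahat $ j - lcut (pa j) (ahat $ j) (lw $ j) (real i / real l)))
                + ahat \<bullet> x
              \<le> w - (\<Sum>k\<le>i. v k)) \<and>
       (\<forall>i\<le>l. \<forall>j. \<alpha> i j - \<beta> i j + column j B \<bullet> u i = x $ j) \<and>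
       (\<forall>i\<le>l. norm (u i) \<le> \<gamma> i))"
proof -
  interpret fuzzy_levels pa ahat lw uw pd \<Gamma> B
    using assms by unfold_locales auto
  define lam where "lam i = real i / real l" for i
  have lam: "0 \<le> lam i \<and> lam i \<le> 1" if "i \<le> l" for i
    using that l by (simp add: lam_def)
  interpret nested_levels "\<lambda>i. level (lam i)" "\<lambda>i. 1 - g_rho \<rho> (lam i)" l
  proof
    show "level (lam k) \<subseteq> level (lam i)" if "i \<le> k" "k \<le> l" for i k
      using that lam by (intro level_antimono) (auto simp: lam_def divide_right_mono)
    show "1 - g_rho \<rho> (lam k) \<le> 1 - g_rho \<rho> (lam i)" if "i \<le> k" "k \<le> l" for i k
      using that rho by (simp add: g_rho_mono lam_def divide_right_mono)
    show "level (lam i) \<noteq> {}" if "i \<le> l" for i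
      using center_in_level lam[OF that] by blast
  qed (use l rho in \<open>auto simp: compact_Cset g_rho_0 g_rho_1 lam_def\<close>)
  have Pset_eq: "Pset l \<rho> pa ahat lw uw pd \<Gamma> B = ambiguity_set"
    unfolding Pset_def PM_def ambiguity_set_def by (auto simp: lam_def)
  have continuous: "continuous_on UNIV (\<lambda>a::real^'n. a \<bullet> x)"
    by (intro continuous_intros)
  have sum_eq: "(\<Sum>i\<le>l. (g_rho \<rho> (real i / real l) - 1) * v i)
      = - (\<Sum>i\<le>l. (1 - g_rho \<rho> (lam i)) * v i)" for v
    by (simp add: lam_def algebra_simps flip: sum_negf)
  show ?thesis
    unfolding Pset_eq sup_integral_le_iff[OF continuous] sum_eq
    using staircase_dual_iff[OF lam, where p = "\<lambda>i. 1 - g_rho \<rho> (lam i)" and b = b and x = x]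
    by (simp add: lam_def)
qed

end
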